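(* Let $H\ge S\ge1$ and let $\{\boldsymbol{d}_{\theta s}\}$, $\theta=1,\ldots,H$, $s=1,\ldots,S$, be random variables that are jointly absolutely continuous with respect to Lebesgue measure on $\mathbb{R}_+^{H\times S}$; write $\boldsymbol{D}=[\boldsymbol{d}_{\theta s}]$. Let $k$ be a receiving agent with (deterministic) aggregate weight vector $x_k=[x_{1k},\ldots,x_{Sk}]^\top$ (entries strictly positive, summing to $1$). Let $\boldsymbol{\theta}^\star_k=\arg\min_{\theta\in\{1,\ldots,H\}}\sum_{s=1}^S x_{sk}\boldsymbol{d}_{\theta s}$, and when it is unique define $\boldsymbol{B}_k=(\mathbb{1}_He_{\boldsymbol{\theta}^\star_k}^\top-I_H)\boldsymbol{D}$ and $\boldsymbol{C}_k=\begin{bmatrix}\boldsymbol{B}_k\\ \mathbb{1}_S^\top\end{bmatrix}$. Then $$\mathbb{P}\big[\boldsymbol{\theta}^\star_k\text{ is unique and }\mathrm{rank}(\boldsymbol{C}_k)=S\big]=1.$$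
   Context: Setting: a weakly-connected network with $S$ sending sub-networks $\mathcal{N}_1,\ldots,\mathcal{N}_S$, in each of which all agents share the same true distribution $f^{(s)}$ and likelihoods $L^{(s)}(\theta)$, $\theta\in\{1,\ldots,H\}$; $\boldsymbol{d}_{\theta s}$ models the KL divergence $D[f^{(s)}\|L^{(s)}(\theta)]$. The combination matrix $A$ (nonnegative, left-stochastic) has block form $\begin{bmatrix}A_{\mathcal{S}}&A_{\mathcal{S}\mathcal{R}}\\0&A_{\mathcal{R}}\end{bmatrix}$ with $A_{\mathcal{S}}=\mathrm{blockdiag}\{A_{\mathcal{N}_s}\}$, each sending sub-network strongly connected with Perron vector $p^{(s)}$, each receiving sub-network connected and linked to at least one agent of every sending sub-network. With $E=\mathrm{blockdiag}\{p^{(s)}\mathbb{1}^\top_{N_s}\}$ and $\Omega=[\omega_{\ell k}]=EA_{\mathcal{S}\mathcal{R}}(I-A_{\mathcal{R}})^{-1}$, the aggregate weight is $x_{sk}=\sum_{\ell\in\mathcal{N}_s}\omega_{\ell k}$. $e_m$ is the $m$-th canonical basis vector of $\mathbb{R}^H$ and $\mathbb{1}_L$ the all-ones vector. *)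

theory Defs
  imports "HOL-Analysis.Analysis" "HOL-Probability.Probability"
begin

text \<open>Matrices D = [d_{theta s}] are rendered as real^'s^'h : rows indexed by
  hypotheses theta (finite type 'h, H = CARD('h)), columns by sending
  sub-networks s (finite type 's, S = CARD('s)).\<close>

definition agg_cost :: "('s::finite \<Rightarrow> real) \<Rightarrow> real^'s^'h \<Rightarrow> 'h \<Rightarrow> real" where
  "agg_cost x D \<theta> = (\<Sum>s\<in>UNIV. x s * D $ \<theta> $ s)"

definition argmin_unique :: "('h \<Rightarrow> real) \<Rightarrow> bool" where
  "argmin_unique f \<longleftrightarrow> (\<exists>!\<theta>. \<forall>\<theta>'. f \<theta> \<le> f \<theta>')"

definition argmin_of :: "('h \<Rightarrow> real) \<Rightarrow> 'h" where
  "argmin_of f = (THE \<theta>. \<forall>\<theta>'. f \<theta> \<le> f \<theta>')"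

definition Bmat :: "real^'s^'h \<Rightarrow> 'h \<Rightarrow> real^'s^'h" where
  "Bmat D t = (\<chi> \<theta> s. D $ t $ s - D $ \<theta> $ s)"

text \<open>C = [B; 1_S^T], an (H+1) x S matrix; the extra row is indexed by Inr ().\<close>
definition Cmat :: "real^'s^'h \<Rightarrow> 'h \<Rightarrow> real^'s^('h + unit)" where
  "Cmat D t = (\<chi> r. case r of Inl \<theta> \<Rightarrow> Bmat D t $ \<theta> | Inr _ \<Rightarrow> (\<chi> s. 1))"

end

theory Submission
  imports Defs
begin

(* The event fails only when D lies in a Lebesgue-null set of matrices, and
   absolute continuity makes that event null. Two costs tie only on a
   hyperplane. C is rank deficient iff some nonzero v with 1^T v = 0 makes all
   rows of D agree on v; normalising v_{s1} = 1 gives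
   d_{s1} = c 1 - sum_{s ~= s1} v_s d_s, so such D form the image of an affine
   hyperplane under a polynomial map whose argument stores c and the v_s in
   column s1 (there is room for them because S <= H). Differentiable maps send
   null sets to null sets. *)

definition has_flat_direction :: "real^'s::finite^'h::finite \<Rightarrow> bool" where
  "has_flat_direction Z \<longleftrightarrow>
     (\<exists>v. v \<noteq> 0 \<and> sum (($) v) UNIV = 0 \<and> (\<forall>\<theta> \<theta>'. Z$\<theta> \<bullet> v = Z$\<theta>' \<bullet> v))"

lemma Cmat_mult_eq_0_iff:
  fixes Z :: "real^'s::finite^'h::finite"
  shows "Cmat Z t *v v = 0 \<longleftrightarrow> sum (($) v) UNIV = 0 \<and> (\<forall>\<theta>. Z$t \<bullet> v = Z$\<theta> \<bullet> v)"
proof -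
  have row_Inl: "(Cmat Z t *v v) $ Inl \<theta> = Z$t \<bullet> v - Z$\<theta> \<bullet> v" for \<theta>
    by (simp add: Cmat_def Bmat_def matrix_vector_mult_def inner_vec_def
        left_diff_distrib sum_subtractf)
  have row_Inr: "(Cmat Z t *v v) $ Inr u = sum (($) v) UNIV" for u
    by (simp add: Cmat_def matrix_vector_mult_def)
  show ?thesis
    unfolding vec_eq_iff split_sum_all row_Inl row_Inr by auto
qed

lemma rank_Cmat_eq_card_iff:
  fixes Z :: "real^'s::finite^'h::finite"
  shows "rank (Cmat Z t) = CARD('s) \<longleftrightarrow> \<not> has_flat_direction Z"
proof -
  have "rank (Cmat Z t) = CARD('s) \<longleftrightarrow> (\<forall>v. Cmat Z t *v v = 0 \<longrightarrow> v = 0)"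
    by (simp add: full_rank_injective linear_injective_0)
  also have "\<dots> \<longleftrightarrow> \<not> has_flat_direction Z"
    unfolding Cmat_mult_eq_0_iff has_flat_direction_def by metis
  finally show ?thesis .
qed

lemma closed_has_flat_direction: "closed {Z::real^'s::finite^'h::finite. has_flat_direction Z}"
proof -
  define K where "K = {v::real^'s. norm v = 1 \<and> sum (($) v) UNIV = 0}"
  define T where "T = {(v, Z::real^'s^'h). \<forall>\<theta> \<theta>'. Z$\<theta> \<bullet> v = Z$\<theta>' \<bullet> v}"
  have "bounded K"
    unfolding K_def bounded_iff by auto
  moreover have "closed K"
    unfolding K_def by (intro closed_Collect_conj closed_Collect_eq continuous_intros)
  ultimately have "compact K"
    by (simp add: compact_eq_bounded_closed)
  moreover have "closed T"
    unfolding T_def case_prod_beta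
    by (intro closed_Collect_all closed_Collect_eq continuous_intros)
  ultimately have "closed {Z. \<exists>v. v \<in> K \<and> (v, Z) \<in> T}"
    by (rule closed_compact_projection)
  moreover have "{Z. has_flat_direction Z} = {Z. \<exists>v. v \<in> K \<and> (v, Z) \<in> T}"
  proof (intro Collect_cong iffI)
    fix Z :: "real^'s^'h" assume "has_flat_direction Z"
    then obtain v where "v \<noteq> 0" "sum (($) v) UNIV = 0" "\<forall>\<theta> \<theta>'. Z$\<theta> \<bullet> v = Z$\<theta>' \<bullet> v"
      unfolding has_flat_direction_def by blast
    then have "v /\<^sub>R norm v \<in> K \<and> (v /\<^sub>R norm v, Z) \<in> T"
      by (simp add: K_def T_def flip: sum_distrib_left)
    then show "\<exists>v. v \<in> K \<and> (v, Z) \<in> T" by blast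
  next
    fix Z :: "real^'s^'h" assume "\<exists>v. v \<in> K \<and> (v, Z) \<in> T"
    then obtain v where "norm v = 1" "sum (($) v) UNIV = 0" "\<forall>\<theta> \<theta>'. Z$\<theta> \<bullet> v = Z$\<theta>' \<bullet> v"
      by (auto simp: K_def T_def)
    then show "has_flat_direction Z"
      unfolding has_flat_direction_def by (intro exI[of _ v]) auto
  qed
  ultimately show ?thesis
    by simp
qed

lemma polynomial_function_matrix:
  fixes f :: "'a::real_normed_vector \<Rightarrow> real^'n::finite^'m::finite"
  assumes "\<And>i j. real_polynomial_function (\<lambda>x. f x $ i $ j)"
  shows "polynomial_function f"
  unfolding polynomial_function_iff_Basis_inner
  using assms by (auto simp: Basis_vec_def inner_axis)

lemma real_polynomial_function_matrix_entry:
  "real_polynomial_function (\<lambda>W::real^'n::finite^'m::finite. W $ i $ j)"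
  by (intro real_polynomial_function.intros(1) bounded_linear_compose[OF bounded_linear_vec_nth]
      bounded_linear_vec_nth)

(* Column s1 of W holds the parameters: c at row g s1 and v_s at row g s. *)
definition flat_chart :: "('s::finite \<Rightarrow> 'h::finite) \<Rightarrow> 's \<Rightarrow> real^'s^'h \<Rightarrow> real^'s^'h" where
  "flat_chart g s\<^sub>1 W = (\<chi> \<theta> s. if s = s\<^sub>1
     then W$g s\<^sub>1$s\<^sub>1 - (\<Sum>s'\<in>-{s\<^sub>1}. W$\<theta>$s' * W$g s'$s\<^sub>1) else W$\<theta>$s)"

lemma polynomial_function_flat_chart: "polynomial_function (flat_chart g s\<^sub>1)"
proof (rule polynomial_function_matrix)
  fix \<theta> s
  show "real_polynomial_function (\<lambda>W. flat_chart g s\<^sub>1 W $ \<theta> $ s)"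
    unfolding flat_chart_def
    by (cases "s = s\<^sub>1")
       (simp_all add: real_polynomial_function_diff real_polynomial_function_sum
         real_polynomial_function.intros(4) real_polynomial_function_matrix_entry)
qed

lemma has_flat_direction_imp_in_flat_chart_image:
  fixes g :: "'s::finite \<Rightarrow> 'h::finite" and Z :: "real^'s^'h"
  assumes "inj g" and "has_flat_direction Z"
  shows "\<exists>s\<^sub>1. Z \<in> flat_chart g s\<^sub>1 ` {W. (\<Sum>s\<in>-{s\<^sub>1}. W$g s$s\<^sub>1) = -1}"
proof -
  obtain v where "v \<noteq> 0" and v_sum: "sum (($) v) UNIV = 0"
    and v_rows: "\<forall>\<theta> \<theta>'. Z$\<theta> \<bullet> v = Z$\<theta>' \<bullet> v"
    using assms(2) unfolding has_flat_direction_def by blast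
  then obtain s\<^sub>1 where "v$s\<^sub>1 \<noteq> 0"
    by (metis vec_eq_iff zero_index)
  define w where "w = v /\<^sub>R v$s\<^sub>1"
  have w_s1: "w$s\<^sub>1 = 1"
    using \<open>v$s\<^sub>1 \<noteq> 0\<close> by (simp add: w_def)
  have w_rest: "(\<Sum>s\<in>-{s\<^sub>1}. w$s) = -1"
  proof -
    have "sum (($) w) UNIV = 0"
      using v_sum by (simp add: w_def flip: sum_distrib_left)
    then show ?thesis
      using sum.remove[of UNIV s\<^sub>1 "($) w"] w_s1 by (simp add: Compl_eq_Diff_UNIV)
  qed
  define c where "c = Z$g s\<^sub>1 \<bullet> w"
  have c_rows: "c = Z$\<theta> \<bullet> w" for \<theta>
    using v_rows by (simp add: c_def w_def)
  define u where "u = (\<chi> s. if s = s\<^sub>1 then c else w$s)"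
  define W where "W = (\<chi> \<theta> s. if s = s\<^sub>1 \<and> \<theta> \<in> range g then u$inv g \<theta> else Z$\<theta>$s)"
  have W_param: "W$g s$s\<^sub>1 = u$s" for s
    using assms(1) by (simp add: W_def)
  have W_other: "W$\<theta>$s = Z$\<theta>$s" if "s \<noteq> s\<^sub>1" for \<theta> s
    using that by (simp add: W_def)
  have "(\<Sum>s\<in>-{s\<^sub>1}. W$g s$s\<^sub>1) = -1"
    using w_rest by (simp add: W_param u_def)
  moreover have "flat_chart g s\<^sub>1 W = Z"
  proof (unfold vec_eq_iff, intro allI)
    fix \<theta> s
    have "(\<Sum>s'\<in>-{s\<^sub>1}. W$\<theta>$s' * W$g s'$s\<^sub>1) = (\<Sum>s'\<in>-{s\<^sub>1}. Z$\<theta>$s' * w$s')"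
      by (intro sum.cong) (simp_all add: W_param W_other u_def)
    also have "\<dots> = Z$\<theta> \<bullet> w - Z$\<theta>$s\<^sub>1"
      using sum.remove[of UNIV s\<^sub>1 "\<lambda>s'. Z$\<theta>$s' * w$s'"] w_s1
      by (simp add: inner_vec_def Compl_eq_Diff_UNIV)
    finally show "flat_chart g s\<^sub>1 W $ \<theta> $ s = Z $ \<theta> $ s"
      using W_param[of s\<^sub>1] W_other c_rows[of \<theta>] by (simp add: flat_chart_def u_def)
  qed
  ultimately show ?thesis by blast
qed

lemma negligible_has_flat_direction:
  assumes "CARD('s::finite) \<le> CARD('h::finite)"
  shows "negligible {Z::real^'s^'h. has_flat_direction Z}"
proof -
  obtain g :: "'s \<Rightarrow> 'h" where "inj g"
    using assms card_le_inj[of "UNIV::'s set" "UNIV::'h set"] by auto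
  have "negligible {W::real^'s^'h. (\<Sum>s\<in>-{s\<^sub>1}. W$g s$s\<^sub>1) = -1}" for s\<^sub>1
  proof -
    have "{W::real^'s^'h. (\<Sum>s\<in>-{s\<^sub>1}. W$g s$s\<^sub>1) = -1}
        = {W. (\<Sum>s\<in>-{s\<^sub>1}. axis (g s) (axis s\<^sub>1 1)) \<bullet> W = -1}"
      by (simp add: inner_sum_left inner_axis')
    then show ?thesis by (simp add: negligible_hyperplane)
  qed
  then have "negligible (flat_chart g s\<^sub>1 ` {W. (\<Sum>s\<in>-{s\<^sub>1}. W$g s$s\<^sub>1) = -1})" for s\<^sub>1
    by (intro negligible_differentiable_image_negligible order_refl
        differentiable_on_polynomial_function polynomial_function_flat_chart)
  then have "negligible (\<Union>s\<^sub>1. flat_chart g s\<^sub>1 ` {W. (\<Sum>s\<in>-{s\<^sub>1}. W$g s$s\<^sub>1) = -1})"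
    by (intro negligible_Union) auto
  then show ?thesis
    by (rule negligible_subset)
       (use has_flat_direction_imp_in_flat_chart_image[OF \<open>inj g\<close>] in blast)
qed

lemma agg_cost_eq_inner: "agg_cost x Z \<theta> = axis \<theta> (\<chi> s. x s) \<bullet> Z"
  unfolding inner_axis' by (simp add: agg_cost_def inner_vec_def mult.commute)

lemma negligible_not_inj_agg_cost:
  fixes x :: "'s::finite \<Rightarrow> real"
  assumes "\<exists>s. x s \<noteq> 0"
  shows "negligible {Z::real^'s^'h::finite. \<not> inj (agg_cost x Z)}"
proof -
  have "(\<chi> s. x s) \<noteq> 0"
    using assms by (auto simp: vec_eq_iff)
  then have tie: "negligible {Z::real^'s^'h. agg_cost x Z \<theta> = agg_cost x Z \<theta>'}"
    if "\<theta> \<noteq> \<theta>'" for \<theta> \<theta>'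
    using that negligible_hyperplane[of "axis \<theta> (\<chi> s. x s) - axis \<theta>' (\<chi> s. x s)" 0]
    by (simp add: agg_cost_eq_inner inner_diff_left axis_eq_axis)
  have "{Z. \<not> inj (agg_cost x Z)}
      = (\<Union>(\<theta>, \<theta>')\<in>{(\<theta>, \<theta>'). \<theta> \<noteq> \<theta>'}. {Z::real^'s^'h. agg_cost x Z \<theta> = agg_cost x Z \<theta>'})"
    by (auto simp: inj_def)
  then show ?thesis
    by (auto intro!: negligible_Union tie)
qed

lemma argmin_unique_iff:
  fixes f :: "'h \<Rightarrow> real"
  shows "argmin_unique f \<longleftrightarrow> (\<exists>\<theta>. \<forall>\<theta>'. \<theta>' \<noteq> \<theta> \<longrightarrow> f \<theta> < f \<theta>')"
proof
  assume "argmin_unique f"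
  then obtain \<theta> where min: "\<forall>\<theta>'. f \<theta> \<le> f \<theta>'"
    and unique: "\<And>t. \<forall>\<theta>'. f t \<le> f \<theta>' \<Longrightarrow> t = \<theta>"
    unfolding argmin_unique_def by blast
  have "f \<theta> < f \<theta>'" if "\<theta>' \<noteq> \<theta>" for \<theta>'
    using min unique[of \<theta>'] that by (metis order.trans not_less)
  then show "\<exists>\<theta>. \<forall>\<theta>'. \<theta>' \<noteq> \<theta> \<longrightarrow> f \<theta> < f \<theta>'" by blast
next
  assume "\<exists>\<theta>. \<forall>\<theta>'. \<theta>' \<noteq> \<theta> \<longrightarrow> f \<theta> < f \<theta>'"
  then show "argmin_unique f"
    unfolding argmin_unique_def by (metis order.refl order.strict_iff_not)
qed

lemma argmin_unique_if_inj:
  fixes f :: "'h::finite \<Rightarrow> real"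
  assumes "inj f"
  shows "argmin_unique f"
proof -
  have "Min (range f) \<in> range f"
    by (intro Min_in) auto
  then obtain \<theta> where \<theta>: "f \<theta> = Min (range f)"
    by (metis rangeE)
  have "f \<theta> < f \<theta>'" if "\<theta>' \<noteq> \<theta>" for \<theta>'
  proof -
    have "f \<theta> \<le> f \<theta>'"
      unfolding \<theta> by simp
    moreover have "f \<theta> \<noteq> f \<theta>'"
      using that assms by (auto dest: injD)
    ultimately show ?thesis by simp
  qed
  then show ?thesis
    unfolding argmin_unique_iff by blast
qed

lemma open_argmin_unique_agg_cost:
  "open {Z::real^'s::finite^'h::finite. argmin_unique (agg_cost x Z)}"
proof -
  have minimisers: "{Z::real^'s^'h. argmin_unique (agg_cost x Z)}
      = (\<Union>\<theta>. \<Inter>\<theta>'\<in>-{\<theta>}. {Z. agg_cost x Z \<theta> < agg_cost x Z \<theta>'})"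
    by (auto simp: argmin_unique_iff)
  show ?thesis
    unfolding minimisers agg_cost_eq_inner
    by (intro open_UN open_INT ballI open_Collect_less continuous_intros) simp_all
qed

lemma (in prob_space) prob_preimage_eq_1_if_negligible_compl:
  fixes D :: "'a \<Rightarrow> 'b::euclidean_space"
  assumes D: "D \<in> borel_measurable M"
    and ac: "absolutely_continuous lborel (distr M lborel D)"
    and G: "G \<in> sets borel" and null: "negligible (-G)"
  shows "prob {\<omega> \<in> space M. D \<omega> \<in> G} = 1"
proof -
  have "-G \<in> null_sets lborel"
    using null G by (simp add: negligible_iff_null_sets null_sets_completion_iff)
  then have "AE Z in lborel. Z \<in> G"
    by (rule AE_I') auto
  then have "AE Z in distr M lborel D. Z \<in> G"
    by (intro absolutely_continuous_AE[OF _ ac]) simp_all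
  then have "AE \<omega> in M. D \<omega> \<in> G"
    using D by (intro AE_distrD[of D M lborel]) simp_all
  moreover have "{\<omega> \<in> space M. D \<omega> \<in> G} \<in> events"
    using D G by measurable
  ultimately show ?thesis
    by (simp add: prob_Collect_eq_1)
qed

theorem theorem3:
  fixes M :: "'w measure"
    and D :: "'w \<Rightarrow> real^'s::finite^'h::finite"
    and x :: "'s \<Rightarrow> real"
  assumes "prob_space M"
    and "CARD('s) \<le> CARD('h)"
    and "D \<in> borel_measurable M"
    and "absolutely_continuous lborel (distr M lborel D)"
    and "AE \<omega> in M. \<forall>\<theta> s. D \<omega> $ \<theta> $ s \<ge> 0"
    and "\<forall>s. x s > 0"
    and "(\<Sum>s\<in>UNIV. x s) = 1"
  shows "measure M {\<omega> \<in> space M.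
            argmin_unique (agg_cost x (D \<omega>)) \<and>
            rank (Cmat (D \<omega>) (argmin_of (agg_cost x (D \<omega>)))) = CARD('s)} = 1"
proof -
  define G where "G = {Z::real^'s^'h. argmin_unique (agg_cost x Z) \<and> \<not> has_flat_direction Z}"
  have "open G"
    unfolding G_def Collect_conj_eq
    by (intro open_Int open_argmin_unique_agg_cost)
       (use closed_has_flat_direction in \<open>simp add: open_closed Compl_eq\<close>)
  have "\<exists>s. x s \<noteq> 0"
    using assms(6) by (metis less_irrefl)
  then have "negligible ({Z::real^'s^'h. \<not> inj (agg_cost x Z)} \<union> {Z. has_flat_direction Z})"
    by (intro negligible_Un negligible_not_inj_agg_cost negligible_has_flat_direction assms(2))
  moreover have "-G \<subseteq> {Z. \<not> inj (agg_cost x Z)} \<union> {Z. has_flat_direction Z}"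
    unfolding G_def using argmin_unique_if_inj by blast
  ultimately have "negligible (-G)"
    by (rule negligible_subset)
  then have "measure M {\<omega> \<in> space M. D \<omega> \<in> G} = 1"
    using \<open>open G\<close> assms(1,3,4)
    by (intro prob_space.prob_preimage_eq_1_if_negligible_compl borel_open)
  then show ?thesis
    by (simp add: G_def rank_Cmat_eq_card_iff)
qed

end
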